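(* Let $K\ge 1$ and ${\bf p},{\bf q}\in[0,1]^K$ with $q_k\le p_k$ for all $k$, and let $\Lambda=\{\boldsymbol\lambda\in[0,1]^K: q_k\le\lambda_k\le p_k,\ k=1,\dots,K\}$. Let $\mathcal{V}\subseteq\mathcal{S}_K$ be a closed set (with respect to the Euclidean distance on $\mathbb{R}^K$), and let ${\bf u}\in\mathcal{S}_K$. Then ${\bf u}$ incurs sure loss on $\Lambda$ relative to $\mathcal{V}$ if and only if $({\bf u},{\bf v})$ induces Simpson's paradox in $({\bf p},{\bf q})$ for all ${\bf v}\in\mathcal{V}$.
   Context: $\mathcal{S}_K=\{(v_1,\dots,v_K): \sum_{k=1}^K v_k=1,\ v_k\ge0\}$ is the standard simplex; elements of $\mathcal{S}_K$ are called aggregation rules and $\mathcal{V}$ is the set of desirable aggregation rules. Let $\mathcal{P}_{\mathcal{V}}=\{\boldsymbol\lambda^\top{\bf v}:\boldsymbol\lambda\in\Lambda,\ {\bf v}\in\mathcal{V}\}$. "${\bf u}$ incurs sure loss on $\Lambda$ relative to $\mathcal{V}$" means: $\sup_{\boldsymbol\lambda\in\Lambda}\boldsymbol\lambda^\top{\bf u}<\inf\mathcal{P}_{\mathcal{V}}$ or $\inf_{\boldsymbol\lambda\in\Lambda}\boldsymbol\lambda^\top{\bf u}>\sup\mathcal{P}_{\mathcal{V}}$. "$({\bf u},{\bf v})$ induces Simpson's paradox in $({\bf p},{\bf q})$ for all ${\bf v}\in\mathcal{V}$" means: ${\bf p}^\top{\bf u}<\inf_{{\bf v}\in\mathcal{V}}{\bf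 q}^\top{\bf v}$ or ${\bf q}^\top{\bf u}>\sup_{{\bf v}\in\mathcal{V}}{\bf p}^\top{\bf v}$. *)

theory Defs
  imports "HOL-Analysis.Analysis" "HOL-Library.Extended_Real"
begin

text \<open>Vectors in R^K are modelled as real^'k for a finite index type 'k (so K = CARD('k) \<ge> 1).
  Infima/suprema are taken in the extended reals so that empty sets behave as in the paper
  (inf of empty = +\<infinity>, sup of empty = -\<infinity>).\<close>

definition std_simplex :: "(real^'k) set" where
  "std_simplex = {v. (\<Sum>k\<in>UNIV. v $ k) = 1 \<and> (\<forall>k. 0 \<le> v $ k)}"

definition box_Lambda :: "real^'k \<Rightarrow> real^'k \<Rightarrow> (real^'k) set" where
  "box_Lambda p q = {l. (\<forall>k. 0 \<le> l $ k \<and> l $ k \<le> 1) \<and> (\<forall>k. q $ k \<le> l $ k \<and> l $ k \<le> p $ k)}"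

definition P_V :: "(real^'k) set \<Rightarrow> (real^'k) set \<Rightarrow> real set" where
  "P_V Lam V = {l \<bullet> v | l v. l \<in> Lam \<and> v \<in> V}"

definition sure_loss :: "real^'k \<Rightarrow> (real^'k) set \<Rightarrow> (real^'k) set \<Rightarrow> bool" where
  "sure_loss u Lam V \<longleftrightarrow>
     (SUP l\<in>Lam. ereal (l \<bullet> u)) < (INF x\<in>P_V Lam V. ereal x)
   \<or> (INF l\<in>Lam. ereal (l \<bullet> u)) > (SUP x\<in>P_V Lam V. ereal x)"

definition simpson_all :: "real^'k \<Rightarrow> (real^'k) set \<Rightarrow> real^'k \<Rightarrow> real^'k \<Rightarrow> bool" where
  "simpson_all u V p q \<longleftrightarrow>
     ereal (p \<bullet> u) < (INF v\<in>V. ereal (q \<bullet> v))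
   \<or> ereal (q \<bullet> u) > (SUP v\<in>V. ereal (p \<bullet> v))"

end

theory Submission
  imports Defs
begin

text \<open>Every vector of the simplex is nonnegative, so \<open>\<lambda> \<bullet> w\<close> is monotone in \<open>\<lambda>\<close> and over the box
  \<open>\<Lambda>\<close> it ranges between \<open>q \<bullet> w\<close> and \<open>p \<bullet> w\<close>, both attained. Hence the extreme values of
  \<open>\<lambda> \<bullet> u\<close> over \<open>\<Lambda>\<close> are \<open>q \<bullet> u\<close>, \<open>p \<bullet> u\<close>, and the extreme values of \<open>\<P>\<^sub>\<V>\<close> are the extreme values
  of \<open>q \<bullet> v\<close> and \<open>p \<bullet> v\<close> over \<open>\<V>\<close>; the two conditions then coincide literally.\<close>

lemma inner_vec_mono_nonneg:
  fixes a b w :: "real^'k"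
  assumes "\<forall>k. a $ k \<le> b $ k" and "\<forall>k. 0 \<le> w $ k"
  shows "a \<bullet> w \<le> b \<bullet> w"
  unfolding inner_vec_def by (rule sum_mono) (simp add: assms mult_right_mono)

lemma std_simplex_nonneg: "w \<in> std_simplex \<Longrightarrow> 0 \<le> w $ k"
  unfolding std_simplex_def by blast

lemma box_Lambda_inner_bounds:
  fixes l w p q :: "real^'k"
  assumes "l \<in> box_Lambda p q" and "\<forall>k. 0 \<le> w $ k"
  shows "q \<bullet> w \<le> l \<bullet> w" and "l \<bullet> w \<le> p \<bullet> w"
  using assms by (auto simp: box_Lambda_def intro!: inner_vec_mono_nonneg)

lemma upper_corner_in_box_Lambda:
  "\<forall>k. 0 \<le> p $ k \<and> p $ k \<le> 1 \<Longrightarrow> \<forall>k. q $ k \<le> p $ k \<Longrightarrow> p \<in> box_Lambda p q"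
  unfolding box_Lambda_def by auto

lemma lower_corner_in_box_Lambda:
  "\<forall>k. 0 \<le> q $ k \<and> q $ k \<le> 1 \<Longrightarrow> \<forall>k. q $ k \<le> p $ k \<Longrightarrow> q \<in> box_Lambda p q"
  unfolding box_Lambda_def by auto

lemma SUP_box_Lambda_inner:
  assumes "p \<in> box_Lambda p q" and "\<forall>k. 0 \<le> w $ k"
  shows "(SUP l\<in>box_Lambda p q. ereal (l \<bullet> w)) = ereal (p \<bullet> w)"
proof (rule antisym)
  show "(SUP l\<in>box_Lambda p q. ereal (l \<bullet> w)) \<le> ereal (p \<bullet> w)"
    by (rule SUP_least) (simp add: box_Lambda_inner_bounds(2)[OF _ assms(2)])
qed (rule SUP_upper[OF assms(1)])

lemma INF_box_Lambda_inner:
  assumes "q \<in> box_Lambda p q" and "\<forall>k. 0 \<le> w $ k"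
  shows "(INF l\<in>box_Lambda p q. ereal (l \<bullet> w)) = ereal (q \<bullet> w)"
proof (rule antisym)
  show "ereal (q \<bullet> w) \<le> (INF l\<in>box_Lambda p q. ereal (l \<bullet> w))"
    by (rule INF_greatest) (simp add: box_Lambda_inner_bounds(1)[OF _ assms(2)])
qed (rule INF_lower[OF assms(1)])

lemma P_V_eq_image: "P_V Lam V = (\<lambda>(v, l). l \<bullet> v) ` (V \<times> Lam)"
  unfolding P_V_def by auto

lemma SUP_P_V_box_Lambda:
  assumes "p \<in> box_Lambda p q" and "\<And>v k. v \<in> V \<Longrightarrow> 0 \<le> v $ k"
  shows "(SUP x\<in>P_V (box_Lambda p q) V. ereal x) = (SUP v\<in>V. ereal (p \<bullet> v))"
proof -
  have "(SUP x\<in>P_V (box_Lambda p q) V. ereal x)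
      = (SUP v\<in>V. SUP l\<in>box_Lambda p q. ereal (l \<bullet> v))"
    unfolding P_V_eq_image image_image SUP_pair by (simp add: split_def)
  also have "\<dots> = (SUP v\<in>V. ereal (p \<bullet> v))"
    using assms by (simp add: SUP_box_Lambda_inner)
  finally show ?thesis .
qed

lemma INF_P_V_box_Lambda:
  assumes "q \<in> box_Lambda p q" and "\<And>v k. v \<in> V \<Longrightarrow> 0 \<le> v $ k"
  shows "(INF x\<in>P_V (box_Lambda p q) V. ereal x) = (INF v\<in>V. ereal (q \<bullet> v))"
proof -
  have "(INF x\<in>P_V (box_Lambda p q) V. ereal x)
      = (INF v\<in>V. INF l\<in>box_Lambda p q. ereal (l \<bullet> v))"
    unfolding P_V_eq_image image_image INF_pair by (simp add: split_def)
  also have "\<dots> = (INF v\<in>V. ereal (q \<bullet> v))"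
    using assms by (simp add: INF_box_Lambda_inner)
  finally show ?thesis .
qed

theorem theorem4p1:
  fixes p q u :: "real^'k" and V :: "(real^'k) set"
  assumes "\<forall>k. 0 \<le> p $ k \<and> p $ k \<le> 1"
    and "\<forall>k. 0 \<le> q $ k \<and> q $ k \<le> 1"
    and "\<forall>k. q $ k \<le> p $ k"
    and "V \<subseteq> std_simplex"
    and "closed V"
    and "u \<in> std_simplex"
  shows "sure_loss u (box_Lambda p q) V \<longleftrightarrow> simpson_all u V p q"
proof -
  have p: "p \<in> box_Lambda p q" using assms(1,3) by (rule upper_corner_in_box_Lambda)
  have q: "q \<in> box_Lambda p q" using assms(2,3) by (rule lower_corner_in_box_Lambda)
  have u: "\<forall>k. 0 \<le> u $ k" using assms(6) by (simp add: std_simplex_nonneg)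
  have V: "\<And>v k. v \<in> V \<Longrightarrow> 0 \<le> v $ k" using assms(4) std_simplex_nonneg by blast
  show ?thesis
    unfolding sure_loss_def simpson_all_def
    by (simp add: SUP_box_Lambda_inner[OF p u] INF_box_Lambda_inner[OF q u]
        SUP_P_V_box_Lambda[OF p V] INF_P_V_box_Lambda[OF q V])
qed

end
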